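(* Let $(\Omega,\mathcal F,\mathbb P)$ be a probability space. For each $N\in\mathbb N$ let $\{t_j\}_{j\in\mathbb N}=\{t_j^{(N)}\}_{j\in\mathbb N}$ be a sequence of positive random variables on this space (the dependence on $N$ is suppressed in the notation) satisfying: (i) $\mathbb E(t_i)=\frac1N$ for all $i$ and all $N$; (ii) there exist $r>0$ and a constant $\tilde C>0$ such that $\mathbb E(t_i^{2+r})\le \frac{\tilde C}{N^{2+r}}$ for all $i$ and all $N$; (iii) for all $m\in\mathbb N$ (and all $N$), the vector $(t_1,\dots,t_m)$ is negatively superadditive dependent. Set $\tau_0=0$, $\tau_i=\sum_{j=1}^i t_j$ for $i\ge1$, and $N(1)=\sum_{j\ge1}\mathbf 1_{\tau_j\le 1}$. Let $W=(W_s)_{s\ge0}$ be a random function on the same probability space that is almost surely continuous, let $a\in\mathbb R$, and consider observations $$Y_{\tau_i}=a\tau_i+\varepsilon_{\tau_i},\qquad \varepsilon_{\tau_i}=W_{\tau_i}-W_{\tau_{i-1}},\qquad i=1,\dots,N(1),$$ with least square estimator $$\hat a_{N(1)}=\frac{\sum_{i=1}^{N(1)}Y_{\tau_i}\tau_i}{\sum_{i=1}^{N(1)}\tau_i^2}.$$ Then, almost surely as $N\to\infty$, $$N(1)\big(\hat a_{N(1)}-a\big)\to 3\int_0^1 (W_1-W_s)\,ds.$$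
   Context: A function $\phi:\mathbb R^m\to\mathbb R$ is superadditive if $\phi(x\vee y)+\phi(x\wedge y)\ge\phi(x)+\phi(y)$ for all $x,y\in\mathbb R^m$, where $\vee$ and $\wedge$ denote componentwise maximum and minimum. A random vector $(X_1,\dots,X_m)$ is negatively superadditive dependent (NSD) if for every superadditive $\phi$ such that the expectation $\mathbb E\phi(X_1,\dots,X_m)$ exists, $\mathbb E\phi(X_1,\dots,X_m)\le\mathbb E\phi(X_1^*,\dots,X_m^* )$, where $X_1^*,\dots,X_m^*$ are independent and $X_i^*$ has the same distribution as $X_i$ for each $i$. *)

theory Defs
  imports "HOL-Probability.Probability"
begin

text \<open>Vectors in R^m are represented as extensional functions on the index set {1..m}
  (elements of PiE {1..m} (\<lambda>_. UNIV)); componentwise max/min is sup/inf of functions.\<close>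

definition superadditive_on :: "nat \<Rightarrow> ((nat \<Rightarrow> real) \<Rightarrow> real) \<Rightarrow> bool" where
  "superadditive_on m \<phi> \<longleftrightarrow>
     (\<forall>x\<in>PiE {1..m} (\<lambda>_. UNIV). \<forall>y\<in>PiE {1..m} (\<lambda>_. UNIV).
        \<phi> (sup x y) + \<phi> (inf x y) \<ge> \<phi> x + \<phi> y)"

text \<open>Negative superadditive dependence of (X 1, ..., X m) on the probability space M.
  The independent copy (X*_1,...,X*_m) is realised by the product of the marginal laws.\<close>
definition NSD :: "'a measure \<Rightarrow> nat \<Rightarrow> (nat \<Rightarrow> 'a \<Rightarrow> real) \<Rightarrow> bool" where
  "NSD M m X \<longleftrightarrow>
     (\<forall>\<phi>. superadditive_on m \<phi>
        \<and> \<phi> \<in> borel_measurable (PiM {1..m} (\<lambda>_. borel))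
        \<and> integrable M (\<lambda>\<omega>. \<phi> (\<lambda>i\<in>{1..m}. X i \<omega>))
        \<and> integrable (PiM {1..m} (\<lambda>i. distr M borel (X i))) \<phi>
      \<longrightarrow> (\<integral>\<omega>. \<phi> (\<lambda>i\<in>{1..m}. X i \<omega>) \<partial>M)
            \<le> (\<integral>x. \<phi> x \<partial>(PiM {1..m} (\<lambda>i. distr M borel (X i)))))"

end

theory Submission
  imports Defs "HOL-Real_Asymp.Real_Asymp"
begin

(* Fix s > 0 and call the N-th array regular if the first 2N increments are at most N^(-s) and
   the partial sums tau_m, m <= 2N, lie within N^(-s) of m/N.  Along regular arrays the statement
   is deterministic: N(1) (ahat - a) = N(1) * E / S with S = sum tau_i^2 = N/3 + o(N), and by Abel
   summation E = sum (W(tau_i) - W(tau_(i-1))) tau_i is W(tau_n) tau_n minus a Riemann sum of W,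
   so E tends to W(1) - integral_0^1 W.  Irregularity has summable probability: a large increment
   by Markov's inequality with the (2+r)-th moment, a large deviation of the (truncated) partial
   sums by a Chernoff bound.  The Chernoff bound survives negative superadditive dependence because
   x |-> exp (l * sum g(x_i)) is superadditive for monotone g, so the joint moment generating
   function is dominated by that of independent copies.  Borel-Cantelli finishes the proof. *)

lemma sum_squares_atLeast1_atMost:
  "(\<Sum>i\<in>{1..n}. (real i)\<^sup>2) = real n * (real n + 1) * (2 * real n + 1) / 6"
  by (induction n) (simp_all add: field_simps power2_eq_square)

lemma summation_by_parts:
  fixes f g :: "nat \<Rightarrow> 'a::comm_ring"
  shows "(\<Sum>i\<in>{1..n}. (f i - f (i - 1)) * g i)
    = f n * g n - f 0 * g 0 - (\<Sum>i\<in>{1..n}. f (i - 1) * (g i - g (i - 1)))"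
  by (induction n) (simp_all add: algebra_simps)

lemma sum_squares_diff_le:
  fixes x y :: "'i \<Rightarrow> real" and \<delta> B :: real
  assumes "\<And>i. i \<in> A \<Longrightarrow> \<bar>x i - y i\<bar> \<le> \<delta> \<and> \<bar>x i + y i\<bar> \<le> B"
  shows "\<bar>(\<Sum>i\<in>A. (x i)\<^sup>2) - (\<Sum>i\<in>A. (y i)\<^sup>2)\<bar> \<le> real (card A) * (\<delta> * B)"
proof -
  have "\<bar>(\<Sum>i\<in>A. (x i)\<^sup>2) - (\<Sum>i\<in>A. (y i)\<^sup>2)\<bar> \<le> (\<Sum>i\<in>A. \<bar>x i - y i\<bar> * \<bar>x i + y i\<bar>)"
    unfolding sum_subtractf[symmetric] abs_mult[symmetric]
    by (rule order_trans[OF sum_abs]) (simp add: power2_eq_square algebra_simps)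
  also have "\<dots> \<le> (\<Sum>i\<in>A. \<delta> * B)"
    using assms by (intro sum_mono mult_mono) force+
  finally show ?thesis by simp
qed

lemma exp_le_quadratic:
  fixes u :: real
  assumes "u \<le> 1"
  shows "exp u \<le> 1 + u + u\<^sup>2"
proof (cases "0 \<le> u")
  case True
  then show ?thesis using exp_bound[OF True assms] by simp
next
  case False
  have "1 - u \<le> exp (- u)"
    using exp_ge_add_one_self[of "- u"] by simp
  then have "exp u \<le> 1 / (1 - u)"
    using False by (simp add: exp_minus field_simps)
  also have "\<dots> \<le> 1 + u + u\<^sup>2"
  proof -
    have "(1 - u) * (1 + u + u\<^sup>2) = 1 - u * u\<^sup>2"
      by (simp add: algebra_simps power2_eq_square)
    then show ?thesis
      using False by (simp add: divide_le_eq mult_nonpos_nonneg mult.commute)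
  qed
  finally show ?thesis .
qed

lemma square_le_powr_bound:
  fixes x h r :: real
  assumes "0 < h" "0 < x" "0 < r"
  shows "x\<^sup>2 \<le> h\<^sup>2 + x powr (2 + r) / h powr r"
proof (cases "x \<le> h")
  case True
  then have "x\<^sup>2 \<le> h\<^sup>2" using assms by (intro power_mono) auto
  then show ?thesis using assms by (simp add: add_increasing2)
next
  case False
  then have "1 \<le> (x / h) powr r"
    using assms by (intro ge_one_powr_ge_zero) auto
  then have "x\<^sup>2 * 1 \<le> x\<^sup>2 * (x / h) powr r"
    by (intro mult_left_mono) auto
  also have "\<dots> = x powr (2 + r) / h powr r"
    using assms by (simp add: powr_add powr_divide powr_numeral)
  finally show ?thesis by (simp add: add_increasing)
qed

lemma summable_real_mult_exp_neg_powr: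
  fixes s :: real
  assumes "0 < s"
  shows "summable (\<lambda>N. real N * exp (- (real N powr s)))"
proof (rule summable_comparison_test_bigo)
  show "summable (\<lambda>N. norm (1 / real N ^ 2))"
    using inverse_power_summable[of 2] by (simp add: divide_inverse)
  show "(\<lambda>N. real N * exp (- (real N powr s))) \<in> O(\<lambda>N. 1 / real N ^ 2)"
    using assms by real_asymp
qed

lemma convex_on_majorized_pair:
  fixes f :: "real \<Rightarrow> real"
  assumes f: "convex_on UNIV f" and "a \<le> A" and "b \<le> A" and sum_eq: "A + B = a + b"
  shows "f a + f b \<le> f A + f B"
proof (cases "A = B")
  case True
  then have "a = A" "b = A" using assms by linarith+
  then show ?thesis using True by simp
next
  case False
  then have "B < A" using assms by linarith
  define \<theta> where "\<theta> = (a - B) / (A - B)"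
  have "0 \<le> \<theta>" "\<theta> \<le> 1"
    unfolding \<theta>_def using \<open>B < A\<close> assms by (auto simp: divide_le_eq)
  moreover have "\<theta> * (A - B) = a - B"
    unfolding \<theta>_def using \<open>B < A\<close> by simp
  then have "a = (1 - \<theta>) * B + \<theta> * A" and "b = (1 - \<theta>) * A + \<theta> * B"
    using sum_eq unfolding left_diff_distrib right_diff_distrib by linarith+
  ultimately have "f a \<le> (1 - \<theta>) * f B + \<theta> * f A" and "f b \<le> (1 - \<theta>) * f A + \<theta> * f B"
    using convex_onD[OF f] by auto
  then show ?thesis by (simp add: algebra_simps)
qed

lemma convex_on_exp_scaled: "convex_on UNIV (\<lambda>s::real. exp (l * s))"
proof (rule convex_onI)
  fix t x y :: real assume "0 < t" "t < 1"
  then show "exp (l * ((1 - t) *\<^sub>R x + t *\<^sub>R y)) \<le> (1 - t) * exp (l * x) + t * exp (l * y)"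
    using convex_onD[OF exp_convex, of t "l * x" "l * y"] by (simp add: algebra_simps)
qed simp

section \<open>Riemann sums and the deterministic limit\<close>

lemma riemann_sum_integral_error:
  fixes w :: "real \<Rightarrow> real" and \<tau> :: "nat \<Rightarrow> real" and n :: nat
  assumes "mono \<tau>" and "continuous_on {\<tau> 0..\<tau> n} w"
    and osc: "\<And>i s. i \<in> {1..n} \<Longrightarrow> s \<in> {\<tau> (i - 1)..\<tau> i} \<Longrightarrow> \<bar>w s - w (\<tau> (i - 1))\<bar> \<le> e"
  shows "\<bar>(\<Sum>i\<in>{1..n}. w (\<tau> (i - 1)) * (\<tau> i - \<tau> (i - 1))) - integral {\<tau> 0..\<tau> n} w\<bar>
    \<le> e * (\<tau> n - \<tau> 0)"
  using assms(2,3)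
proof (induction n)
  case 0 then show ?case by simp
next
  case (Suc n)
  have le: "\<tau> 0 \<le> \<tau> n" "\<tau> n \<le> \<tau> (Suc n)" using \<open>mono \<tau>\<close> by (simp_all add: monoD)
  have cont: "continuous_on {\<tau> n..\<tau> (Suc n)} w"
    by (rule continuous_on_subset[OF Suc.prems(1)]) (use le in auto)
  have IH: "\<bar>(\<Sum>i\<in>{1..n}. w (\<tau> (i - 1)) * (\<tau> i - \<tau> (i - 1))) - integral {\<tau> 0..\<tau> n} w\<bar>
      \<le> e * (\<tau> n - \<tau> 0)"
    using Suc.prems le by (intro Suc.IH) (auto elim!: continuous_on_subset)
  have "integral {\<tau> 0..\<tau> (Suc n)} w = integral {\<tau> 0..\<tau> n} w + integral {\<tau> n..\<tau> (Suc n)} w"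
    using le Suc.prems(1) by (intro Henstock_Kurzweil_Integration.integral_combine[symmetric]
        integrable_continuous_real) auto
  moreover have "integral {\<tau> n..\<tau> (Suc n)} w
      = w (\<tau> n) * (\<tau> (Suc n) - \<tau> n) + integral {\<tau> n..\<tau> (Suc n)} (\<lambda>s. w s - w (\<tau> n))"
    using le integral_diff[OF integrable_continuous_real[OF cont] integrable_const_ivl] by simp
  moreover have "norm (integral {\<tau> n..\<tau> (Suc n)} (\<lambda>s. w s - w (\<tau> n))) \<le> e * (\<tau> (Suc n) - \<tau> n)"
    using le cont Suc.prems(2)[of "Suc n"]
    by (intro integral_bound continuous_intros) auto
  ultimately show ?case using IH by (simp add: algebra_simps)
qed

lemma tendsto_riemann_sum:
  fixes w :: "real \<Rightarrow> real" and \<tau> :: "nat \<Rightarrow> nat \<Rightarrow> real" and n :: "nat \<Rightarrow> nat"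
  assumes cont: "continuous_on {0..1} w" and \<delta>: "\<delta> \<longlonglongrightarrow> 0" and end_lim: "(\<lambda>N. \<tau> N (n N)) \<longlonglongrightarrow> 1"
    and ev: "eventually (\<lambda>N. mono (\<tau> N) \<and> \<tau> N 0 = 0 \<and> \<tau> N (n N) \<le> 1 \<and>
      (\<forall>i\<in>{1..n N}. \<tau> N i - \<tau> N (i - 1) \<le> \<delta> N)) sequentially"
  shows "(\<lambda>N. \<Sum>i\<in>{1..n N}. w (\<tau> N (i - 1)) * (\<tau> N i - \<tau> N (i - 1))) \<longlonglongrightarrow> integral {0..1} w"
proof -
  define F where "F x = integral {0..x} w" for x
  have "(\<lambda>N. (\<Sum>i\<in>{1..n N}. w (\<tau> N (i - 1)) * (\<tau> N i - \<tau> N (i - 1))) - F (\<tau> N (n N))) \<longlonglongrightarrow> 0"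
  proof (rule tendstoI)
    fix e :: real assume "0 < e"
    then obtain d where "0 < d"
      and d: "\<And>u s. u \<in> {0..1} \<Longrightarrow> s \<in> {0..1} \<Longrightarrow> dist s u < d \<Longrightarrow> dist (w s) (w u) < e / 2"
      using compact_uniformly_continuous[OF cont] unfolding uniformly_continuous_on_def
      by (metis compact_Icc half_gt_zero)
    show "eventually (\<lambda>N. dist ((\<Sum>i\<in>{1..n N}. w (\<tau> N (i - 1)) * (\<tau> N i - \<tau> N (i - 1)))
        - F (\<tau> N (n N))) 0 < e) sequentially"
      using ev order_tendstoD(2)[OF \<delta> \<open>0 < d\<close>]
    proof eventually_elim
      case (elim N)
      then have mono: "mono (\<tau> N)" and "\<tau> N 0 = 0" "\<tau> N (n N) \<le> 1" by auto
      have range: "0 \<le> \<tau> N i" "\<tau> N i \<le> 1" if "i \<le> n N" for i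
        using monoD[OF mono, of 0 i] monoD[OF mono, of i "n N"] elim that by auto
      have "\<bar>w s - w (\<tau> N (i - 1))\<bar> \<le> e / 2" if "i \<in> {1..n N}" "s \<in> {\<tau> N (i - 1)..\<tau> N i}" for i s
        using d[of "\<tau> N (i - 1)" s] range[of i] range[of "i - 1"] elim that
        by (force simp: dist_real_def)
      then have "\<bar>(\<Sum>i\<in>{1..n N}. w (\<tau> N (i - 1)) * (\<tau> N i - \<tau> N (i - 1))) - F (\<tau> N (n N))\<bar>
          \<le> e / 2 * (\<tau> N (n N) - \<tau> N 0)"
        unfolding F_def \<open>\<tau> N 0 = 0\<close>[symmetric] using range
        by (intro riemann_sum_integral_error mono continuous_on_subset[OF cont]) auto
      also have "\<dots> < e" using \<open>0 < e\<close> elim by auto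
      finally show ?case by (simp add: dist_real_def)
    qed
  qed
  moreover have "(\<lambda>N. F (\<tau> N (n N))) \<longlonglongrightarrow> F 1"
  proof (rule continuous_on_tendsto_compose[OF _ end_lim])
    show "continuous_on {0..1} F"
      unfolding F_def by (intro indefinite_integral_continuous_1 integrable_continuous_real cont)
    show "eventually (\<lambda>N. \<tau> N (n N) \<in> {0..1}) sequentially"
      using ev by eventually_elim (auto dest: monoD[of _ 0 "n _"])
  qed simp
  ultimately show ?thesis by (auto simp: F_def dest: tendsto_add)
qed

lemma tendsto_sum_squares_div:
  fixes \<tau> :: "nat \<Rightarrow> nat \<Rightarrow> real" and n :: "nat \<Rightarrow> nat"
  assumes n_lim: "(\<lambda>N. real (n N) / real N) \<longlonglongrightarrow> 1" and \<delta>: "\<delta> \<longlonglongrightarrow> 0"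
    and ev: "eventually (\<lambda>N. \<forall>i\<in>{1..n N}.
      \<bar>\<tau> N i - real i / real N\<bar> \<le> \<delta> N \<and> \<bar>\<tau> N i + real i / real N\<bar> \<le> B) sequentially"
  shows "(\<lambda>N. (\<Sum>i\<in>{1..n N}. (\<tau> N i)\<^sup>2) / real N) \<longlonglongrightarrow> 1 / 3"
proof -
  define q where "q N = real (n N) / real N" for N
  have inv: "(\<lambda>N. 1 / real N) \<longlonglongrightarrow> 0" using lim_const_over_n[of 1] by simp
  have grid: "(\<Sum>i\<in>{1..n N}. (real i / real N)\<^sup>2) / real N = q N * (q N + 1 / N) * (2 * q N + 1 / N) / 6"
    for N
  proof -
    have "(\<Sum>i\<in>{1..n N}. (real i / real N)\<^sup>2) = (\<Sum>i\<in>{1..n N}. (real i)\<^sup>2) / (real N)\<^sup>2"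
      by (simp add: power_divide sum_divide_distrib)
    then show ?thesis unfolding sum_squares_atLeast1_atMost q_def
      by (cases "N = 0") (simp_all add: field_simps power2_eq_square)
  qed
  have "(\<lambda>N. q N * (q N + 1 / N) * (2 * q N + 1 / N) / 6) \<longlonglongrightarrow> 1 * (1 + 0) * (2 * 1 + 0) / 6"
    unfolding q_def by (intro tendsto_intros n_lim inv) simp
  then have grid_lim: "(\<lambda>N. (\<Sum>i\<in>{1..n N}. (real i / real N)\<^sup>2) / real N) \<longlonglongrightarrow> 1 / 3"
    unfolding grid by simp
  have "(\<lambda>N. (\<Sum>i\<in>{1..n N}. (\<tau> N i)\<^sup>2) / real N - (\<Sum>i\<in>{1..n N}. (real i / real N)\<^sup>2) / real N)
      \<longlonglongrightarrow> 0"
  proof (rule Lim_null_comparison)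
    show "eventually (\<lambda>N. norm ((\<Sum>i\<in>{1..n N}. (\<tau> N i)\<^sup>2) / real N
        - (\<Sum>i\<in>{1..n N}. (real i / real N)\<^sup>2) / real N) \<le> q N * (\<delta> N * B)) sequentially"
      using ev
    proof eventually_elim
      case (elim N)
      then show ?case
        using sum_squares_diff_le[of "{1..n N}" "\<tau> N" "\<lambda>i. real i / real N" "\<delta> N" B]
        by (simp add: q_def diff_divide_distrib[symmetric] divide_right_mono)
    qed
    show "(\<lambda>N. q N * (\<delta> N * B)) \<longlonglongrightarrow> 0"
      unfolding q_def using tendsto_mult[OF n_lim tendsto_mult[OF \<delta> tendsto_const[of B]]] by simp
  qed
  from tendsto_add[OF this grid_lim] show ?thesis by simp
qed

(* Only the first 2N increments are constrained: on this event fewer than 2N sampling times lie in [0,1]. *)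
definition near_uniform :: "real \<Rightarrow> nat \<Rightarrow> (nat \<Rightarrow> real) \<Rightarrow> bool" where
  "near_uniform \<delta> N x \<longleftrightarrow> (\<forall>j\<in>{1..2 * N}. x j \<le> \<delta>) \<and>
     (\<forall>m\<in>{1..2 * N}. \<bar>(\<Sum>j\<in>{1..m}. x j) - real m / real N\<bar> < \<delta>)"

lemma sublevel_set_mono_eq_atLeastAtMost:
  fixes \<tau> :: "nat \<Rightarrow> real"
  assumes "mono \<tau>" and "c < \<tau> k"
  shows "{j. 1 \<le> j \<and> \<tau> j \<le> c} = {1..card {j. 1 \<le> j \<and> \<tau> j \<le> c}}"
proof -
  define S where "S = {j. 1 \<le> j \<and> \<tau> j \<le> c}"
  have "S \<subseteq> {..<k}"
    using assms by (auto simp: S_def intro: leI dest: monoD[of _ k])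
  then have "finite S" by (rule finite_subset) simp
  define p where "p = Max (insert 0 S)"
  have "S = {1..p}"
  proof
    show "S \<subseteq> {1..p}"
      using \<open>finite S\<close> by (auto simp: S_def p_def)
    show "{1..p} \<subseteq> S"
    proof
      fix j assume j: "j \<in> {1..p}"
      then have "p \<in> S"
        using Max_in[of "insert 0 S"] \<open>finite S\<close> by (auto simp: p_def)
      then show "j \<in> S"
        using j monoD[OF \<open>mono \<tau>\<close>, of j p] by (auto simp: S_def)
    qed
  qed
  then show ?thesis unfolding S_def by simp
qed

lemma crossing_index_mono:
  fixes \<tau> :: "nat \<Rightarrow> real" and c :: real
  defines "n \<equiv> card {j. 1 \<le> j \<and> \<tau> j \<le> c}"
  assumes mono: "mono \<tau>" and "\<tau> 1 \<le> c" and "c < \<tau> k"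
  shows "1 \<le> n" and "n < k" and "\<tau> n \<le> c" and "c < \<tau> (Suc n)"
proof -
  have n_eq: "{j. 1 \<le> j \<and> \<tau> j \<le> c} = {1..n}"
    unfolding n_def using mono \<open>c < \<tau> k\<close> by (rule sublevel_set_mono_eq_atLeastAtMost)
  have "1 \<in> {1..n}"
    unfolding n_eq[symmetric] using \<open>\<tau> 1 \<le> c\<close> by simp
  then show "1 \<le> n" by simp
  then have "n \<in> {j. 1 \<le> j \<and> \<tau> j \<le> c}"
    unfolding n_eq by simp
  then show "\<tau> n \<le> c" by simp
  have "Suc n \<notin> {j. 1 \<le> j \<and> \<tau> j \<le> c}"
    unfolding n_eq by simp
  then show "c < \<tau> (Suc n)" by simp
  show "n < k"
  proof (rule ccontr)
    assume "\<not> n < k"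
    then have "\<tau> k \<le> \<tau> n" by (intro monoD[OF mono]) simp
    then show False using \<open>c < \<tau> k\<close> \<open>\<tau> n \<le> c\<close> by simp
  qed
qed

lemma near_uniform_partial_sums:
  fixes x :: "nat \<Rightarrow> real"
  defines "\<tau> \<equiv> \<lambda>i. \<Sum>j\<in>{1..i}. x j"
  defines "n \<equiv> card {j. 1 \<le> j \<and> \<tau> j \<le> 1}"
  assumes pos: "\<And>j. 1 \<le> j \<Longrightarrow> 0 < x j" and "1 \<le> N" and "\<delta> < 1"
    and near: "near_uniform \<delta> N x"
  shows "1 \<le> n" and "\<tau> n \<le> 1" and "1 - \<delta> \<le> \<tau> n" and "\<bar>real n / real N - 1\<bar> \<le> \<delta> + 1 / real N"
    and "\<And>i. i \<in> {1..n} \<Longrightarrow> x i \<le> \<delta> \<and> \<bar>\<tau> i - real i / real N\<bar> \<le> \<delta> \<and> real i / real N \<le> 2"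
proof -
  have mono: "mono \<tau>"
    unfolding \<tau>_def using pos by (intro monoI sum_mono2) (auto intro: less_imp_le)
  have x_le: "x j \<le> \<delta>" and close: "\<bar>\<tau> j - real j / real N\<bar> < \<delta>" if "j \<in> {1..2 * N}" for j
    using near that by (auto simp: near_uniform_def \<tau>_def)
  have "\<bar>\<tau> (2 * N) - 2\<bar> < \<delta>"
    using close[of "2 * N"] \<open>1 \<le> N\<close> by simp
  then have "1 < \<tau> (2 * N)"
    using \<open>\<delta> < 1\<close> by (simp add: abs_less_iff)
  have "x 1 \<le> \<delta>"
    using x_le \<open>1 \<le> N\<close> by simp
  then have "\<tau> 1 \<le> 1"
    using \<open>\<delta> < 1\<close> by (simp add: \<tau>_def)
  note crossing = crossing_index_mono[OF mono \<open>\<tau> 1 \<le> 1\<close> \<open>1 < \<tau> (2 * N)\<close>, folded n_def]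
  show "1 \<le> n" and "\<tau> n \<le> 1" by (fact crossing)+
  have "n < 2 * N" by (fact crossing)
  then have n_in: "n \<in> {1..2 * N}" and Suc_n_in: "Suc n \<in> {1..2 * N}"
    using \<open>1 \<le> n\<close> by auto
  have "1 < \<tau> n + x (Suc n)"
    using crossing(4) by (simp add: \<tau>_def)
  then show "1 - \<delta> \<le> \<tau> n"
    using x_le[OF Suc_n_in] by simp
  have "real (Suc n) / real N = real n / real N + 1 / real N"
    by (simp add: add_divide_distrib)
  then show "\<bar>real n / real N - 1\<bar> \<le> \<delta> + 1 / real N"
    using close[OF n_in] close[OF Suc_n_in] \<open>\<tau> n \<le> 1\<close> crossing(4) \<open>1 \<le> N\<close>
    unfolding abs_less_iff abs_le_iff by (smt (verit) divide_nonneg_nonneg of_nat_0_le_iff)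
  fix i assume "i \<in> {1..n}"
  moreover have "real i \<le> 2 * real N"
    using \<open>i \<in> {1..n}\<close> \<open>n < 2 * N\<close> by simp
  then have "real i / real N \<le> 2"
    using \<open>1 \<le> N\<close> by (simp add: divide_le_eq)
  ultimately show "x i \<le> \<delta> \<and> \<bar>\<tau> i - real i / real N\<bar> \<le> \<delta> \<and> real i / real N \<le> 2"
    using x_le[of i] close[of i] \<open>n < 2 * N\<close> by auto
qed

lemma near_uniformI:
  fixes x :: "nat \<Rightarrow> real"
  assumes "c \<le> \<delta>" and small: "\<And>j. j \<in> {1..2 * N} \<Longrightarrow> x j \<le> c"
    and above: "\<And>m. m \<in> {1..2 * N} \<Longrightarrow> (\<Sum>j\<in>{1..m}. min (x j) c) < real m / real N + \<delta>"
    and below: "\<And>m. m \<in> {1..2 * N} \<Longrightarrow> real m / real N - \<delta> < (\<Sum>j\<in>{1..m}. x j)"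
  shows "near_uniform \<delta> N x"
proof -
  have "(\<Sum>j\<in>{1..m}. min (x j) c) = (\<Sum>j\<in>{1..m}. x j)" if "m \<in> {1..2 * N}" for m
    using small that by (intro sum.cong) (auto simp: min_def)
  then show ?thesis
    using assms unfolding near_uniform_def by (force simp: abs_less_iff)
qed

lemma least_squares_error_eq:
  fixes \<tau> :: "nat \<Rightarrow> real" and w :: "real \<Rightarrow> real"
  assumes "(\<Sum>i\<in>{1..n}. (\<tau> i)\<^sup>2) \<noteq> 0"
  shows "real n * ((\<Sum>i\<in>{1..n}. (a * \<tau> i + (w (\<tau> i) - w (\<tau> (i - 1)))) * \<tau> i)
      / (\<Sum>i\<in>{1..n}. (\<tau> i)\<^sup>2) - a)
    = real n * (\<Sum>i\<in>{1..n}. (w (\<tau> i) - w (\<tau> (i - 1))) * \<tau> i) / (\<Sum>i\<in>{1..n}. (\<tau> i)\<^sup>2)"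
proof -
  have "(\<Sum>i\<in>{1..n}. (a * \<tau> i + (w (\<tau> i) - w (\<tau> (i - 1)))) * \<tau> i)
      = a * (\<Sum>i\<in>{1..n}. (\<tau> i)\<^sup>2) + (\<Sum>i\<in>{1..n}. (w (\<tau> i) - w (\<tau> (i - 1))) * \<tau> i)"
    by (simp add: distrib_right sum.distrib sum_distrib_left power2_eq_square mult.assoc)
  then show ?thesis using assms by (simp add: field_simps)
qed

lemma tendsto_least_squares_ratio:
  fixes \<tau> :: "nat \<Rightarrow> nat \<Rightarrow> real" and n :: "nat \<Rightarrow> nat" and w :: "real \<Rightarrow> real"
  assumes cont: "continuous_on {0..1} w" and \<delta>: "\<delta> \<longlonglongrightarrow> 0"
    and n_lim: "(\<lambda>N. real (n N) / real N) \<longlonglongrightarrow> 1" and end_lim: "(\<lambda>N. \<tau> N (n N)) \<longlonglongrightarrow> 1"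
    and ev: "eventually (\<lambda>N. mono (\<tau> N) \<and> \<tau> N 0 = 0 \<and> \<tau> N (n N) \<le> 1 \<and> (\<forall>i\<in>{1..n N}.
      \<tau> N i - \<tau> N (i - 1) \<le> \<delta> N \<and> \<bar>\<tau> N i - real i / real N\<bar> \<le> \<delta> N \<and> real i / real N \<le> 2)) sequentially"
  shows "(\<lambda>N. real (n N) * (\<Sum>i\<in>{1..n N}. (w (\<tau> N i) - w (\<tau> N (i - 1))) * \<tau> N i)
      / (\<Sum>i\<in>{1..n N}. (\<tau> N i)\<^sup>2)) \<longlonglongrightarrow> 3 * integral {0..1} (\<lambda>s. w 1 - w s)"
proof -
  define R where "R N = (\<Sum>i\<in>{1..n N}. w (\<tau> N (i - 1)) * (\<tau> N i - \<tau> N (i - 1)))" for N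
  have range: "0 \<le> \<tau> N i \<and> \<tau> N i \<le> 1" if "mono (\<tau> N)" "\<tau> N 0 = 0" "\<tau> N (n N) \<le> 1" "i \<le> n N" for N i
    using that monoD[OF that(1), of 0 i] monoD[OF that(1), of i "n N"] by simp
  have "eventually (\<lambda>N. \<forall>i\<in>{1..n N}.
      \<bar>\<tau> N i - real i / real N\<bar> \<le> \<delta> N \<and> \<bar>\<tau> N i + real i / real N\<bar> \<le> 3) sequentially"
    using ev by eventually_elim (use range in fastforce)
  then have S_lim: "(\<lambda>N. (\<Sum>i\<in>{1..n N}. (\<tau> N i)\<^sup>2) / real N) \<longlonglongrightarrow> 1 / 3"
    by (rule tendsto_sum_squares_div[where \<tau> = \<tau>, OF n_lim \<delta>])
  have R_lim: "R \<longlonglongrightarrow> integral {0..1} w"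
    unfolding R_def using ev
    by (intro tendsto_riemann_sum[where \<tau> = \<tau> and n = n, OF cont \<delta> end_lim]) (auto elim!: eventually_mono)
  have "eventually (\<lambda>N. \<tau> N (n N) \<in> {0..1}) sequentially"
    using ev by eventually_elim (use range in simp)
  then have w_end: "(\<lambda>N. w (\<tau> N (n N))) \<longlonglongrightarrow> w 1"
    by (intro continuous_on_tendsto_compose[OF cont end_lim]) simp_all
  \<comment> \<open>Abel summation turns the noise term into a Riemann sum\<close>
  have "eventually (\<lambda>N. w (\<tau> N (n N)) * \<tau> N (n N) - R N
      = (\<Sum>i\<in>{1..n N}. (w (\<tau> N i) - w (\<tau> N (i - 1))) * \<tau> N i)) sequentially"
    using ev by eventually_elim (use summation_by_parts[of "\<lambda>i. w (\<tau> _ i)" "\<tau> _" "n _"] in \<open>simp add: R_def\<close>)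
  moreover have "(\<lambda>N. w (\<tau> N (n N)) * \<tau> N (n N) - R N) \<longlonglongrightarrow> w 1 * 1 - integral {0..1} w"
    by (intro tendsto_intros w_end end_lim R_lim)
  ultimately have E_lim: "(\<lambda>N. \<Sum>i\<in>{1..n N}. (w (\<tau> N i) - w (\<tau> N (i - 1))) * \<tau> N i)
      \<longlonglongrightarrow> w 1 * 1 - integral {0..1} w"
    by (rule Lim_transform_eventually[rotated])
  have "(\<lambda>N. real (n N) / real N * (\<Sum>i\<in>{1..n N}. (w (\<tau> N i) - w (\<tau> N (i - 1))) * \<tau> N i)
      / ((\<Sum>i\<in>{1..n N}. (\<tau> N i)\<^sup>2) / real N)) \<longlonglongrightarrow> 1 * (w 1 * 1 - integral {0..1} w) / (1 / 3)"
    by (intro tendsto_intros n_lim E_lim S_lim) simp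
  also have "1 * (w 1 * 1 - integral {0..1} w) / (1 / 3) = 3 * integral {0..1} (\<lambda>s. w 1 - w s)"
    using integral_diff[OF integrable_const_ivl integrable_continuous_real[OF cont]] by simp
  finally show ?thesis
  proof (rule Lim_transform_eventually)
    show "eventually (\<lambda>N. real (n N) / real N * (\<Sum>i\<in>{1..n N}. (w (\<tau> N i) - w (\<tau> N (i - 1))) * \<tau> N i)
        / ((\<Sum>i\<in>{1..n N}. (\<tau> N i)\<^sup>2) / real N)
      = real (n N) * (\<Sum>i\<in>{1..n N}. (w (\<tau> N i) - w (\<tau> N (i - 1))) * \<tau> N i)
        / (\<Sum>i\<in>{1..n N}. (\<tau> N i)\<^sup>2)) sequentially"
      using eventually_gt_at_top[of 0] by eventually_elim simp
  qed
qed

lemma tendsto_least_squares_error: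
  fixes x :: "nat \<Rightarrow> nat \<Rightarrow> real" and w :: "real \<Rightarrow> real" and \<delta> :: "nat \<Rightarrow> real"
  assumes pos: "\<And>N j. 1 \<le> N \<Longrightarrow> 1 \<le> j \<Longrightarrow> 0 < x N j" and cont: "continuous_on {0..1} w"
    and \<delta>: "\<delta> \<longlonglongrightarrow> 0" and near: "eventually (\<lambda>N. near_uniform (\<delta> N) N (x N)) sequentially"
  shows "(\<lambda>N. let \<tau> = (\<lambda>i. \<Sum>j\<in>{1..i}. x N j);
             n = card {j. j \<ge> 1 \<and> \<tau> j \<le> 1};
             Y = (\<lambda>i. a * \<tau> i + (w (\<tau> i) - w (\<tau> (i - 1))));
             ahat = (\<Sum>i\<in>{1..n}. Y i * \<tau> i) / (\<Sum>i\<in>{1..n}. (\<tau> i)\<^sup>2)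
         in real n * (ahat - a))
    \<longlonglongrightarrow> 3 * integral {0..1} (\<lambda>s. w 1 - w s)"
proof -
  define \<tau> where "\<tau> N i = (\<Sum>j\<in>{1..i}. x N j)" for N i
  define n where "n N = card {j. 1 \<le> j \<and> \<tau> N j \<le> 1}" for N
  define good where "good N \<longleftrightarrow> 1 \<le> N \<and> \<delta> N < 1 \<and> near_uniform (\<delta> N) N (x N)" for N
  have ev_good: "eventually good sequentially"
    using near order_tendstoD(2)[OF \<delta> zero_less_one] eventually_ge_at_top[of 1]
    by eventually_elim (simp add: good_def)
  have grid: "1 \<le> n N" "\<tau> N (n N) \<le> 1" "1 - \<delta> N \<le> \<tau> N (n N)"
    "\<bar>real (n N) / real N - 1\<bar> \<le> \<delta> N + 1 / real N"
    "\<And>i. i \<in> {1..n N} \<Longrightarrow>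
      x N i \<le> \<delta> N \<and> \<bar>\<tau> N i - real i / real N\<bar> \<le> \<delta> N \<and> real i / real N \<le> 2"
    if "good N" for N
    using near_uniform_partial_sums[of "x N" N "\<delta> N"] pos that
    unfolding good_def \<tau>_def n_def by simp_all
  have inv: "(\<lambda>N. 1 / real N) \<longlonglongrightarrow> 0"
    using lim_const_over_n[of 1] by simp
  have "eventually (\<lambda>N. norm (real (n N) / real N - 1) \<le> \<delta> N + 1 / real N) sequentially"
    using ev_good by eventually_elim (use grid(4) in \<open>simp only: real_norm_def\<close>)
  from LIM_zero_cancel[OF Lim_null_comparison[OF this tendsto_add_zero[OF \<delta> inv]]]
  have n_lim: "(\<lambda>N. real (n N) / real N) \<longlonglongrightarrow> 1" .
  have "eventually (\<lambda>N. norm (\<tau> N (n N) - 1) \<le> \<delta> N) sequentially"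
    using ev_good by eventually_elim (use grid(2,3) in fastforce)
  from LIM_zero_cancel[OF Lim_null_comparison[OF this \<delta>]]
  have end_lim: "(\<lambda>N. \<tau> N (n N)) \<longlonglongrightarrow> 1" .
  have incr: "\<tau> N i - \<tau> N (i - 1) = x N i" if "1 \<le> i" for N i
    using that by (cases i) (simp_all add: \<tau>_def)
  have mono: "mono (\<tau> N)" if "good N" for N
    unfolding \<tau>_def using pos that by (intro monoI sum_mono2) (auto simp: good_def intro: less_imp_le)
  have "eventually (\<lambda>N. mono (\<tau> N) \<and> \<tau> N 0 = 0 \<and> \<tau> N (n N) \<le> 1 \<and> (\<forall>i\<in>{1..n N}.
      \<tau> N i - \<tau> N (i - 1) \<le> \<delta> N \<and> \<bar>\<tau> N i - real i / real N\<bar> \<le> \<delta> N \<and> real i / real N \<le> 2)) sequentially"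
    using ev_good by eventually_elim (use mono grid(2,5) incr in \<open>auto simp: \<tau>_def\<close>)
  from tendsto_least_squares_ratio[where \<tau> = \<tau> and n = n, OF cont \<delta> n_lim end_lim this]
  show ?thesis
  proof (rule Lim_transform_eventually)
    show "eventually (\<lambda>N. real (n N) * (\<Sum>i\<in>{1..n N}. (w (\<tau> N i) - w (\<tau> N (i - 1))) * \<tau> N i)
        / (\<Sum>i\<in>{1..n N}. (\<tau> N i)\<^sup>2) = (let \<tau> = (\<lambda>i. \<Sum>j\<in>{1..i}. x N j);
          n = card {j. j \<ge> 1 \<and> \<tau> j \<le> 1};
          Y = (\<lambda>i. a * \<tau> i + (w (\<tau> i) - w (\<tau> (i - 1))));
          ahat = (\<Sum>i\<in>{1..n}. Y i * \<tau> i) / (\<Sum>i\<in>{1..n}. (\<tau> i)\<^sup>2)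
        in real n * (ahat - a))) sequentially"
      using ev_good
    proof eventually_elim
      case (elim N)
      have "0 < (\<tau> N 1)\<^sup>2"
        using pos[of N 1] elim by (simp add: \<tau>_def good_def)
      then have "(\<Sum>i\<in>{1..n N}. (\<tau> N i)\<^sup>2) \<noteq> 0"
        using grid(1)[OF elim] sum_pos2[of "{1..n N}" 1 "\<lambda>i. (\<tau> N i)\<^sup>2"] by auto
      moreover have "(\<lambda>i. \<Sum>j\<in>{1..i}. x N j) = \<tau> N"
        by (simp add: fun_eq_iff \<tau>_def)
      ultimately show ?case
        using least_squares_error_eq[of "\<tau> N" "n N" a w] by (simp add: Let_def n_def)
    qed
  qed
qed

section \<open>Chernoff bounds under negative superadditive dependence\<close>

lemma superadditive_on_convex_sum:
  fixes f g :: "real \<Rightarrow> real"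
  assumes f: "convex_on UNIV f" and g: "mono g"
  shows "superadditive_on m (\<lambda>x. f (\<Sum>i\<in>{1..m}. g (x i)))"
  unfolding superadditive_on_def
proof (intro ballI)
  fix x y :: "nat \<Rightarrow> real"
  have "g (max p q) + g (min p q) = g p + g q" for p q
    by (cases "p \<le> q") (auto simp: max_def min_def)
  then have "(\<Sum>i\<in>{1..m}. g (sup x y i)) + (\<Sum>i\<in>{1..m}. g (inf x y i))
      = (\<Sum>i\<in>{1..m}. g (x i)) + (\<Sum>i\<in>{1..m}. g (y i))"
    by (simp add: sum.distrib[symmetric] sup_max inf_min)
  moreover have "(\<Sum>i\<in>{1..m}. g (x i)) \<le> (\<Sum>i\<in>{1..m}. g (sup x y i))"
    and "(\<Sum>i\<in>{1..m}. g (y i)) \<le> (\<Sum>i\<in>{1..m}. g (sup x y i))"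
    by (auto intro!: sum_mono monoD[OF g] simp: sup_max)
  ultimately show "f (\<Sum>i\<in>{1..m}. g (x i)) + f (\<Sum>i\<in>{1..m}. g (y i))
      \<le> f (\<Sum>i\<in>{1..m}. g (sup x y i)) + f (\<Sum>i\<in>{1..m}. g (inf x y i))"
    by (intro convex_on_majorized_pair[OF f])
qed

lemma (in prob_space) integral_prod_PiM_distr:
  fixes X :: "'i \<Rightarrow> 'a \<Rightarrow> real" and f :: "'i \<Rightarrow> real \<Rightarrow> real"
  assumes "finite I" and X: "\<And>i. i \<in> I \<Longrightarrow> X i \<in> borel_measurable M"
    and f: "\<And>i. i \<in> I \<Longrightarrow> f i \<in> borel_measurable borel"
      "\<And>i. i \<in> I \<Longrightarrow> integrable M (\<lambda>\<omega>. f i (X i \<omega>))"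
  shows "(\<integral>x. (\<Prod>i\<in>I. f i (x i)) \<partial>PiM I (\<lambda>i. distr M borel (X i))) = (\<Prod>i\<in>I. \<integral>\<omega>. f i (X i \<omega>) \<partial>M)"
proof -
  define law where "law i = (if i \<in> I then distr M borel (X i) else return borel 0)" for i
  have law_prob: "prob_space (law i)" for i
    using X by (auto simp: law_def intro!: prob_space_distr prob_space_return)
  interpret product_prob_space law
    by (auto simp: product_prob_space_def product_prob_space_axioms_def product_sigma_finite_def
        law_prob prob_space_imp_sigma_finite)
  have PiM_eq: "PiM I (\<lambda>i. distr M borel (X i)) = PiM I law"
    by (rule PiM_cong) (auto simp: law_def)
  have "integrable (law i) (f i)" if "i \<in> I" for i
    using f X that by (simp add: law_def integrable_distr_eq)
  then have "(\<integral>x. (\<Prod>i\<in>I. f i (x i)) \<partial>PiM I (\<lambda>i. distr M borel (X i)))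
      = (\<Prod>i\<in>I. \<integral>x. f i x \<partial>law i)"
    unfolding PiM_eq by (rule product_integral_prod[OF \<open>finite I\<close>])
  also have "\<dots> = (\<Prod>i\<in>I. \<integral>\<omega>. f i (X i \<omega>) \<partial>M)"
    using f X by (intro prod.cong) (auto simp: law_def integral_distr)
  finally show ?thesis .
qed

lemma NSD_expectation_exp_sum_le:
  fixes M :: "'a measure" and X :: "nat \<Rightarrow> 'a \<Rightarrow> real" and g :: "real \<Rightarrow> real"
  assumes "prob_space M" and nsd: "NSD M m X"
    and X: "\<And>i. i \<in> {1..m} \<Longrightarrow> X i \<in> borel_measurable M"
    and g: "mono g" "g \<in> borel_measurable borel" and bounded: "\<And>x. l * g x \<le> B"
  shows "(\<integral>\<omega>. exp (l * (\<Sum>i\<in>{1..m}. g (X i \<omega>))) \<partial>M) \<le> (\<Prod>i\<in>{1..m}. \<integral>\<omega>. exp (l * g (X i \<omega>)) \<partial>M)"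
proof -
  interpret prob_space M by fact
  note [measurable] = g(2)
  define \<phi> where "\<phi> x = exp (l * (\<Sum>i\<in>{1..m}. g (x i)))" for x :: "nat \<Rightarrow> real"
  have \<phi>_bound: "norm (\<phi> x) \<le> exp (m * B)" for x
  proof -
    have "l * (\<Sum>i\<in>{1..m}. g (x i)) \<le> (\<Sum>i\<in>{1..m}. B)"
      unfolding sum_distrib_left by (intro sum_mono bounded)
    then show ?thesis by (simp add: \<phi>_def)
  qed
  have \<phi>_meas: "\<phi> \<in> borel_measurable (PiM {1..m} (\<lambda>_. borel))"
    unfolding \<phi>_def by measurable
  have "(\<lambda>\<omega>. \<lambda>i\<in>{1..m}. X i \<omega>) \<in> M \<rightarrow>\<^sub>M PiM {1..m} (\<lambda>_. borel)"
    using X by (intro measurable_restrict) auto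
  from measurable_compose[OF this \<phi>_meas]
  have int_M: "integrable M (\<lambda>\<omega>. \<phi> (\<lambda>i\<in>{1..m}. X i \<omega>))"
    by (rule integrable_const_bound[where B="exp (m * B)", rotated]) (use \<phi>_bound in simp)
  interpret product: prob_space "PiM {1..m} (\<lambda>i. distr M borel (X i))"
    using X by (intro prob_space_PiM prob_space_distr) auto
  have "sets (PiM {1..m} (\<lambda>_. borel)) = sets (PiM {1..m} (\<lambda>i. distr M borel (X i)))"
    by (rule sets_PiM_cong) auto
  then have "\<phi> \<in> borel_measurable (PiM {1..m} (\<lambda>i. distr M borel (X i)))"
    using \<phi>_meas measurable_cong_sets by metis
  then have int_product: "integrable (PiM {1..m} (\<lambda>i. distr M borel (X i))) \<phi>"
    using \<phi>_bound by (intro product.integrable_const_bound[where B="exp (m * B)"]) auto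
  have "(\<integral>\<omega>. exp (l * (\<Sum>i\<in>{1..m}. g (X i \<omega>))) \<partial>M) = (\<integral>\<omega>. \<phi> (\<lambda>i\<in>{1..m}. X i \<omega>) \<partial>M)"
    by (auto simp: \<phi>_def intro!: Bochner_Integration.integral_cong sum.cong)
  also have "\<dots> \<le> (\<integral>x. \<phi> x \<partial>PiM {1..m} (\<lambda>i. distr M borel (X i)))"
    using nsd superadditive_on_convex_sum[OF convex_on_exp_scaled[of l] g(1), of m] \<phi>_meas int_M
      int_product
    unfolding NSD_def \<phi>_def by blast
  also have "\<dots> = (\<integral>x. (\<Prod>i\<in>{1..m}. exp (l * g (x i))) \<partial>PiM {1..m} (\<lambda>i. distr M borel (X i)))"
    by (simp add: \<phi>_def sum_distrib_left exp_sum)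
  also have "\<dots> = (\<Prod>i\<in>{1..m}. \<integral>\<omega>. exp (l * g (X i \<omega>)) \<partial>M)"
  proof (rule integral_prod_PiM_distr[OF finite_atLeastAtMost X])
    fix i assume "i \<in> {1..m}"
    note [measurable] = X[OF this]
    show "integrable M (\<lambda>\<omega>. exp (l * g (X i \<omega>)))"
      by (rule integrable_const_bound[where B = "exp B"]) (use bounded in simp, measurable)
  qed measurable
  finally show ?thesis .
qed

lemma expectation_exp_le:
  fixes M :: "'a measure" and Y :: "'a \<Rightarrow> real"
  assumes "prob_space M" and "integrable M Y" and "integrable M (\<lambda>\<omega>. (Y \<omega>)\<^sup>2)"
    and small: "\<And>\<omega>. \<omega> \<in> space M \<Longrightarrow> l * Y \<omega> \<le> 1"
  shows "(\<integral>\<omega>. exp (l * Y \<omega>) \<partial>M) \<le> exp (l * (\<integral>\<omega>. Y \<omega> \<partial>M) + l\<^sup>2 * (\<integral>\<omega>. (Y \<omega>)\<^sup>2 \<partial>M))"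
proof -
  interpret prob_space M by fact
  have [measurable]: "Y \<in> borel_measurable M"
    using \<open>integrable M Y\<close> by auto
  have "integrable M (\<lambda>\<omega>. exp (l * Y \<omega>))"
    using small by (intro integrable_const_bound[where B="exp 1"]) auto
  then have "(\<integral>\<omega>. exp (l * Y \<omega>) \<partial>M) \<le> (\<integral>\<omega>. 1 + l * Y \<omega> + l\<^sup>2 * (Y \<omega>)\<^sup>2 \<partial>M)"
    using assms(2,3) exp_le_quadratic[OF small]
    by (intro integral_mono) (auto simp: power_mult_distrib)
  also have "\<dots> = 1 + (l * (\<integral>\<omega>. Y \<omega> \<partial>M) + l\<^sup>2 * (\<integral>\<omega>. (Y \<omega>)\<^sup>2 \<partial>M))"
    using assms(2,3) by (simp add: prob_space)
  also have "\<dots> \<le> exp (l * (\<integral>\<omega>. Y \<omega> \<partial>M) + l\<^sup>2 * (\<integral>\<omega>. (Y \<omega>)\<^sup>2 \<partial>M))"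
    by (rule exp_ge_add_one_self)
  finally show ?thesis .
qed

lemma NSD_Chernoff_bound:
  fixes M :: "'a measure" and X :: "nat \<Rightarrow> 'a \<Rightarrow> real" and g :: "real \<Rightarrow> real"
  assumes "prob_space M" and nsd: "NSD M m X"
    and X: "\<And>i. i \<in> {1..m} \<Longrightarrow> X i \<in> borel_measurable M"
    and g: "mono g" "g \<in> borel_measurable borel" and bounded: "\<And>x. l * g x \<le> 1"
    and int: "\<And>i. i \<in> {1..m} \<Longrightarrow> integrable M (\<lambda>\<omega>. g (X i \<omega>))"
    and int_sq: "\<And>i. i \<in> {1..m} \<Longrightarrow> integrable M (\<lambda>\<omega>. (g (X i \<omega>))\<^sup>2)"
  shows "measure M {\<omega>\<in>space M. a \<le> l * (\<Sum>i\<in>{1..m}. g (X i \<omega>))}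
    \<le> exp (l * (\<Sum>i\<in>{1..m}. \<integral>\<omega>. g (X i \<omega>) \<partial>M)
         + l\<^sup>2 * (\<Sum>i\<in>{1..m}. \<integral>\<omega>. (g (X i \<omega>))\<^sup>2 \<partial>M) - a)"
proof -
  interpret prob_space M by fact
  define S where "S \<omega> = l * (\<Sum>i\<in>{1..m}. g (X i \<omega>))" for \<omega>
  have "S \<in> borel_measurable M"
    unfolding S_def using X g(2)
    by (intro borel_measurable_times borel_measurable_const borel_measurable_sum measurable_compose[OF X g(2)])
  then have meas: "(\<lambda>\<omega>. exp (S \<omega>)) \<in> borel_measurable M" by measurable
  have "S \<omega> \<le> (\<Sum>i\<in>{1..m}. 1)" for \<omega>
    unfolding S_def sum_distrib_left by (intro sum_mono bounded)
  then have "integrable M (\<lambda>\<omega>. exp (S \<omega>))"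
    using meas by (intro integrable_const_bound[where B="exp m"]) auto
  then have "measure M {\<omega>\<in>space M. exp a \<le> exp (S \<omega>)} \<le> (\<integral>\<omega>. exp (S \<omega>) \<partial>M) / exp a"
    by (intro integral_Markov_inequality_measure) auto
  also have "(\<integral>\<omega>. exp (S \<omega>) \<partial>M) \<le> (\<Prod>i\<in>{1..m}. \<integral>\<omega>. exp (l * g (X i \<omega>)) \<partial>M)"
    unfolding S_def by (rule NSD_expectation_exp_sum_le[OF \<open>prob_space M\<close> nsd X g bounded])
  also have "\<dots> \<le> (\<Prod>i\<in>{1..m}. exp (l * (\<integral>\<omega>. g (X i \<omega>) \<partial>M) + l\<^sup>2 * (\<integral>\<omega>. (g (X i \<omega>))\<^sup>2 \<partial>M)))"
    using bounded by (intro prod_mono conjI integral_nonneg_AE expectation_exp_le[OF \<open>prob_space M\<close>] int int_sq) auto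
  also have "\<dots> = exp (l * (\<Sum>i\<in>{1..m}. \<integral>\<omega>. g (X i \<omega>) \<partial>M) + l\<^sup>2 * (\<Sum>i\<in>{1..m}. \<integral>\<omega>. (g (X i \<omega>))\<^sup>2 \<partial>M))"
    by (simp add: exp_sum[symmetric] sum.distrib sum_distrib_left)
  finally show ?thesis
    by (simp add: S_def exp_diff divide_right_mono)
qed

lemma (in finite_measure) measure_UN_le_card_mult:
  assumes "finite I" "\<And>i. i \<in> I \<Longrightarrow> A i \<in> sets M" "\<And>i. i \<in> I \<Longrightarrow> measure M (A i) \<le> b"
  shows "measure M (\<Union>i\<in>I. A i) \<le> real (card I) * b"
proof -
  have "measure M (\<Union>i\<in>I. A i) \<le> (\<Sum>i\<in>I. measure M (A i))"
    using assms by (intro measure_UNION_le)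
  also have "\<dots> \<le> real (card I) * b"
    using assms(3) sum_bounded_above[of I "\<lambda>i. measure M (A i)" b] by simp
  finally show ?thesis .
qed

section \<open>Almost sure regularity of the sampling times\<close>

locale nsd_sampling = prob_space M for M :: "'a measure" +
  fixes t :: "nat \<Rightarrow> nat \<Rightarrow> 'a \<Rightarrow> real" and r C :: real
  assumes t_measurable: "\<And>N j. 1 \<le> N \<Longrightarrow> 1 \<le> j \<Longrightarrow> t N j \<in> borel_measurable M"
    and t_pos: "\<And>N j \<omega>. 1 \<le> N \<Longrightarrow> 1 \<le> j \<Longrightarrow> \<omega> \<in> space M \<Longrightarrow> 0 < t N j \<omega>"
    and t_integrable: "\<And>N j. 1 \<le> N \<Longrightarrow> 1 \<le> j \<Longrightarrow> integrable M (t N j)"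
    and t_mean: "\<And>N j. 1 \<le> N \<Longrightarrow> 1 \<le> j \<Longrightarrow> (\<integral>\<omega>. t N j \<omega> \<partial>M) = 1 / real N"
    and r_pos: "0 < r" and C_pos: "0 < C"
    and moment_integrable: "\<And>N j. 1 \<le> N \<Longrightarrow> 1 \<le> j \<Longrightarrow> integrable M (\<lambda>\<omega>. t N j \<omega> powr (2 + r))"
    and moment_bound: "\<And>N j. 1 \<le> N \<Longrightarrow> 1 \<le> j \<Longrightarrow>
      (\<integral>\<omega>. t N j \<omega> powr (2 + r) \<partial>M) \<le> C / real N powr (2 + r)"
    and t_NSD: "\<And>N m. 1 \<le> N \<Longrightarrow> NSD M m (t N)"
begin

lemma second_moment:
  assumes "1 \<le> N" "1 \<le> j"
  shows "integrable M (\<lambda>\<omega>. (t N j \<omega>)\<^sup>2)" and "(\<integral>\<omega>. (t N j \<omega>)\<^sup>2 \<partial>M) \<le> (1 + C) / (real N)\<^sup>2"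
proof -
  note [measurable] = t_measurable[OF assms]
  define h where "h = 1 / real N"
  have "0 < h" using assms by (simp add: h_def)
  have bound: "(t N j \<omega>)\<^sup>2 \<le> h\<^sup>2 + t N j \<omega> powr (2 + r) / h powr r" if "\<omega> \<in> space M" for \<omega>
    using square_le_powr_bound[OF \<open>0 < h\<close> t_pos[OF assms that] r_pos] .
  have int_bound: "integrable M (\<lambda>\<omega>. h\<^sup>2 + t N j \<omega> powr (2 + r) / h powr r)"
    using moment_integrable[OF assms] by auto
  show int: "integrable M (\<lambda>\<omega>. (t N j \<omega>)\<^sup>2)"
    using bound by (intro Bochner_Integration.integrable_bound[OF int_bound]) (auto intro!: AE_I2)
  have "(\<integral>\<omega>. (t N j \<omega>)\<^sup>2 \<partial>M) \<le> (\<integral>\<omega>. h\<^sup>2 + t N j \<omega> powr (2 + r) / h powr r \<partial>M)"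
    using bound by (intro integral_mono[OF int int_bound])
  also have "\<dots> = h\<^sup>2 + (\<integral>\<omega>. t N j \<omega> powr (2 + r) \<partial>M) / h powr r"
    using moment_integrable[OF assms] by (simp add: prob_space)
  also have "\<dots> \<le> h\<^sup>2 + C / real N powr (2 + r) / h powr r"
    using moment_bound[OF assms] by (intro add_left_mono divide_right_mono) auto
  also have "\<dots> = (1 + C) / (real N)\<^sup>2"
    using assms by (simp add: h_def powr_add powr_divide powr_numeral field_simps)
  finally show "(\<integral>\<omega>. (t N j \<omega>)\<^sup>2 \<partial>M) \<le> (1 + C) / (real N)\<^sup>2" .
qed

lemma truncated_moments:
  assumes "1 \<le> N" "1 \<le> j" and g: "g \<in> borel_measurable borel"
    and between: "\<And>\<omega>. \<omega> \<in> space M \<Longrightarrow> 0 \<le> g (t N j \<omega>) \<and> g (t N j \<omega>) \<le> t N j \<omega>"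
  shows "integrable M (\<lambda>\<omega>. g (t N j \<omega>))" and "integrable M (\<lambda>\<omega>. (g (t N j \<omega>))\<^sup>2)"
    and "(\<integral>\<omega>. g (t N j \<omega>) \<partial>M) \<le> 1 / real N"
    and "(\<integral>\<omega>. (g (t N j \<omega>))\<^sup>2 \<partial>M) \<le> (1 + C) / (real N)\<^sup>2"
proof -
  have meas: "(\<lambda>\<omega>. g (t N j \<omega>)) \<in> borel_measurable M"
    using measurable_compose[OF t_measurable[OF assms(1,2)] g] .
  have sq_le: "(g (t N j \<omega>))\<^sup>2 \<le> (t N j \<omega>)\<^sup>2" if "\<omega> \<in> space M" for \<omega>
    using between[OF that] by (intro power_mono) auto
  show int: "integrable M (\<lambda>\<omega>. g (t N j \<omega>))"
  proof (rule Bochner_Integration.integrable_bound[OF t_integrable[OF assms(1,2)] meas])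
    show "AE \<omega> in M. norm (g (t N j \<omega>)) \<le> norm (t N j \<omega>)"
      using between by (intro AE_I2) fastforce
  qed
  show int_sq: "integrable M (\<lambda>\<omega>. (g (t N j \<omega>))\<^sup>2)"
  proof (rule Bochner_Integration.integrable_bound[OF second_moment(1)[OF assms(1,2)]])
    show "AE \<omega> in M. norm ((g (t N j \<omega>))\<^sup>2) \<le> norm ((t N j \<omega>)\<^sup>2)"
      using sq_le by (intro AE_I2) simp
  qed (use meas in measurable)
  have "(\<integral>\<omega>. g (t N j \<omega>) \<partial>M) \<le> (\<integral>\<omega>. t N j \<omega> \<partial>M)"
    using between by (intro integral_mono[OF int t_integrable[OF assms(1,2)]]) auto
  then show "(\<integral>\<omega>. g (t N j \<omega>) \<partial>M) \<le> 1 / real N"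
    using t_mean[OF assms(1,2)] by simp
  have "(\<integral>\<omega>. (g (t N j \<omega>))\<^sup>2 \<partial>M) \<le> (\<integral>\<omega>. (t N j \<omega>)\<^sup>2 \<partial>M)"
    using sq_le by (intro integral_mono[OF int_sq second_moment(1)[OF assms(1,2)]])
  then show "(\<integral>\<omega>. (g (t N j \<omega>))\<^sup>2 \<partial>M) \<le> (1 + C) / (real N)\<^sup>2"
    using second_moment(2)[OF assms(1,2)] by simp
qed

lemma sets_partial_sum_events:
  assumes "1 \<le> N"
  shows "1 \<le> j \<Longrightarrow> {\<omega>\<in>space M. c < t N j \<omega>} \<in> sets M"
    and "{\<omega>\<in>space M. a \<le> (\<Sum>j\<in>{1..m}. min (t N j \<omega>) c)} \<in> sets M"
    and "{\<omega>\<in>space M. (\<Sum>j\<in>{1..m}. t N j \<omega>) \<le> a} \<in> sets M"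
proof -
  have sum_meas: "(\<lambda>\<omega>. \<Sum>j\<in>{1..m}. f (t N j \<omega>)) \<in> borel_measurable M"
    if "f \<in> borel_measurable borel" for f :: "real \<Rightarrow> real"
  proof (rule borel_measurable_sum)
    fix j assume "j \<in> {1..m}"
    then have "t N j \<in> borel_measurable M"
      using t_measurable[OF assms] by simp
    from measurable_compose[OF this that] show "(\<lambda>\<omega>. f (t N j \<omega>)) \<in> borel_measurable M" .
  qed
  show "{\<omega>\<in>space M. c < t N j \<omega>} \<in> sets M" if "1 \<le> j"
    using t_measurable[OF assms that] by measurable
  have "(\<lambda>\<omega>. \<Sum>j\<in>{1..m}. min (t N j \<omega>) c) \<in> borel_measurable M"
    by (rule sum_meas) measurable
  then show "{\<omega>\<in>space M. a \<le> (\<Sum>j\<in>{1..m}. min (t N j \<omega>) c)} \<in> sets M"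
    by measurable
  have "(\<lambda>\<omega>. \<Sum>j\<in>{1..m}. t N j \<omega>) \<in> borel_measurable M"
    using sum_meas[of "\<lambda>x. x"] by simp
  then show "{\<omega>\<in>space M. (\<Sum>j\<in>{1..m}. t N j \<omega>) \<le> a} \<in> sets M"
    by measurable
qed

lemma prob_large_increment:
  assumes "1 \<le> N" "0 < c"
  shows "measure M (\<Union>j\<in>{1..2 * N}. {\<omega>\<in>space M. c < t N j \<omega>})
    \<le> 2 * real N * (C / (real N * c) powr (2 + r))"
proof -
  have single: "measure M {\<omega>\<in>space M. c < t N j \<omega>} \<le> C / (real N * c) powr (2 + r)" if "1 \<le> j" for j
  proof -
    note [measurable] = t_measurable[OF assms(1) that]
    have "measure M {\<omega>\<in>space M. c < t N j \<omega>}
        \<le> measure M {\<omega>\<in>space M. c powr (2 + r) \<le> t N j \<omega> powr (2 + r)}"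
      using assms r_pos by (intro finite_measure_mono) (auto intro!: powr_mono2)
    also have "\<dots> \<le> (\<integral>\<omega>. t N j \<omega> powr (2 + r) \<partial>M) / c powr (2 + r)"
      using assms that by (intro integral_Markov_inequality_measure[OF moment_integrable]) auto
    also have "\<dots> \<le> C / real N powr (2 + r) / c powr (2 + r)"
      using moment_bound[OF assms(1) that] assms by (intro divide_right_mono) auto
    also have "\<dots> = C / (real N * c) powr (2 + r)"
      using assms by (simp add: powr_mult)
    finally show ?thesis .
  qed
  have "measure M (\<Union>j\<in>{1..2 * N}. {\<omega>\<in>space M. c < t N j \<omega>})
      \<le> real (card {1..2 * N}) * (C / (real N * c) powr (2 + r))"
    by (rule measure_UN_le_card_mult[OF finite_atLeastAtMost])
      (rule sets_partial_sum_events(1)[OF assms(1)], simp, rule single, simp)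
  then show ?thesis by simp
qed

lemma prob_sum_deviation:
  fixes g :: "real \<Rightarrow> real"
  assumes "1 \<le> N" "m \<le> 2 * N" "l\<^sup>2 \<le> real N"
    and g: "mono g" "g \<in> borel_measurable borel" and bounded: "\<And>x. l * g x \<le> 1"
    and between: "\<And>j \<omega>. 1 \<le> j \<Longrightarrow> \<omega> \<in> space M \<Longrightarrow> 0 \<le> g (t N j \<omega>) \<and> g (t N j \<omega>) \<le> t N j \<omega>"
  shows "measure M {\<omega>\<in>space M. a \<le> l * (\<Sum>j\<in>{1..m}. g (t N j \<omega>))}
    \<le> exp (l * (\<Sum>j\<in>{1..m}. \<integral>\<omega>. g (t N j \<omega>) \<partial>M) + 2 * (1 + C) - a)"
proof -
  note moments = truncated_moments[OF assms(1) _ g(2) between]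
  have "(\<Sum>j\<in>{1..m}. \<integral>\<omega>. (g (t N j \<omega>))\<^sup>2 \<partial>M) \<le> real m * ((1 + C) / (real N)\<^sup>2)"
    using sum_mono[of "{1..m}" _ "\<lambda>_. (1 + C) / (real N)\<^sup>2"] moments(4) by simp
  also have "\<dots> \<le> 2 * real N * ((1 + C) / (real N)\<^sup>2)"
    using assms(2) C_pos by (intro mult_right_mono) auto
  finally have "l\<^sup>2 * (\<Sum>j\<in>{1..m}. \<integral>\<omega>. (g (t N j \<omega>))\<^sup>2 \<partial>M)
      \<le> real N * (2 * real N * ((1 + C) / (real N)\<^sup>2))"
    by (rule mult_mono[OF assms(3)]) (auto intro!: sum_nonneg integral_nonneg_AE)
  also have "\<dots> = 2 * (1 + C)"
    using \<open>1 \<le> N\<close> by (simp add: power2_eq_square)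
  finally have variance_term: "l\<^sup>2 * (\<Sum>j\<in>{1..m}. \<integral>\<omega>. (g (t N j \<omega>))\<^sup>2 \<partial>M) \<le> 2 * (1 + C)" .
  have "measure M {\<omega>\<in>space M. a \<le> l * (\<Sum>j\<in>{1..m}. g (t N j \<omega>))}
    \<le> exp (l * (\<Sum>j\<in>{1..m}. \<integral>\<omega>. g (t N j \<omega>) \<partial>M)
         + l\<^sup>2 * (\<Sum>j\<in>{1..m}. \<integral>\<omega>. (g (t N j \<omega>))\<^sup>2 \<partial>M) - a)"
    using t_measurable[OF \<open>1 \<le> N\<close>] moments(1,2)
    by (intro NSD_Chernoff_bound[OF prob_space_axioms t_NSD[OF \<open>1 \<le> N\<close>] _ g bounded]) auto
  also have "\<dots> \<le> exp (l * (\<Sum>j\<in>{1..m}. \<integral>\<omega>. g (t N j \<omega>) \<partial>M) + 2 * (1 + C) - a)"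
    using variance_term by simp
  finally show ?thesis .
qed

lemma prob_sum_above:
  assumes "1 \<le> N" "0 < l" "l\<^sup>2 \<le> real N"
  shows "measure M (\<Union>m\<in>{1..2 * N}.
      {\<omega>\<in>space M. real m / real N + \<epsilon> \<le> (\<Sum>j\<in>{1..m}. min (t N j \<omega>) (1 / l))})
    \<le> 2 * real N * exp (2 * (1 + C) - l * \<epsilon>)"
proof -
  have between: "0 \<le> min (t N j \<omega>) (1 / l) \<and> min (t N j \<omega>) (1 / l) \<le> t N j \<omega>"
    if "1 \<le> j" "\<omega> \<in> space M" for j \<omega>
    using t_pos[OF \<open>1 \<le> N\<close> that] \<open>0 < l\<close> by simp
  have single: "measure M {\<omega>\<in>space M. real m / real N + \<epsilon> \<le> (\<Sum>j\<in>{1..m}. min (t N j \<omega>) (1 / l))}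
      \<le> exp (2 * (1 + C) - l * \<epsilon>)" if "m \<in> {1..2 * N}" for m
  proof -
    have "(\<Sum>j\<in>{1..m}. \<integral>\<omega>. min (t N j \<omega>) (1 / l) \<partial>M) \<le> (\<Sum>j\<in>{1..m}. 1 / real N)"
      using truncated_moments(3)[OF assms(1) _ _ between] by (intro sum_mono) auto
    then have mean_le: "l * (\<Sum>j\<in>{1..m}. \<integral>\<omega>. min (t N j \<omega>) (1 / l) \<partial>M) \<le> l * (real m / real N)"
      using \<open>0 < l\<close> by (intro mult_left_mono) auto
    have "{\<omega>\<in>space M. real m / real N + \<epsilon> \<le> (\<Sum>j\<in>{1..m}. min (t N j \<omega>) (1 / l))}
      = {\<omega>\<in>space M. l * (real m / real N + \<epsilon>) \<le> l * (\<Sum>j\<in>{1..m}. min (t N j \<omega>) (1 / l))}"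
      using \<open>0 < l\<close> by simp
    also have "measure M \<dots> \<le> exp (l * (\<Sum>j\<in>{1..m}. \<integral>\<omega>. min (t N j \<omega>) (1 / l) \<partial>M)
        + 2 * (1 + C) - l * (real m / real N + \<epsilon>))"
    proof (rule prob_sum_deviation[OF assms(1) _ assms(3) _ _ _ between])
      show "mono (\<lambda>x. min x (1 / l))"
        by (intro monoI min.mono) auto
      show "l * min x (1 / l) \<le> 1" for x
        using \<open>0 < l\<close> mult_left_mono[OF min.cobounded2[of x "1 / l"], of l] by simp
    qed (use that in auto)
    also have "\<dots> \<le> exp (2 * (1 + C) - l * \<epsilon>)"
      using mean_le by (simp add: distrib_left)
    finally show ?thesis .
  qed
  have "measure M (\<Union>m\<in>{1..2 * N}.
      {\<omega>\<in>space M. real m / real N + \<epsilon> \<le> (\<Sum>j\<in>{1..m}. min (t N j \<omega>) (1 / l))})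
    \<le> real (card {1..2 * N}) * exp (2 * (1 + C) - l * \<epsilon>)"
    by (rule measure_UN_le_card_mult[OF finite_atLeastAtMost])
      (rule sets_partial_sum_events(2)[OF assms(1)], erule single)
  then show ?thesis by simp
qed

lemma prob_sum_below:
  assumes "1 \<le> N" "0 < l" "l\<^sup>2 \<le> real N"
  shows "measure M (\<Union>m\<in>{1..2 * N}. {\<omega>\<in>space M. (\<Sum>j\<in>{1..m}. t N j \<omega>) \<le> real m / real N - \<epsilon>})
    \<le> 2 * real N * exp (2 * (1 + C) - l * \<epsilon>)"
proof -
  have pos: "max (t N j \<omega>) 0 = t N j \<omega>" if "1 \<le> j" "\<omega> \<in> space M" for j \<omega>
    using t_pos[OF \<open>1 \<le> N\<close> that] by simp
  have single: "measure M {\<omega>\<in>space M. (\<Sum>j\<in>{1..m}. t N j \<omega>) \<le> real m / real N - \<epsilon>}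
      \<le> exp (2 * (1 + C) - l * \<epsilon>)" if "m \<in> {1..2 * N}" for m
  proof -
    have "(\<integral>\<omega>. max (t N j \<omega>) 0 \<partial>M) = 1 / real N" if "j \<in> {1..m}" for j
      using that t_mean[OF \<open>1 \<le> N\<close>, of j] pos[of j]
      by (subst Bochner_Integration.integral_cong[OF refl, of _ _ "t N j"]) auto
    then have mean_eq: "(\<Sum>j\<in>{1..m}. \<integral>\<omega>. max (t N j \<omega>) 0 \<partial>M) = real m / real N"
      by simp
    have "(\<Sum>j\<in>{1..m}. max (t N j \<omega>) 0) = (\<Sum>j\<in>{1..m}. t N j \<omega>)" if "\<omega> \<in> space M" for \<omega>
      using pos[OF _ that] by (intro sum.cong) auto
    then have "{\<omega>\<in>space M. (\<Sum>j\<in>{1..m}. t N j \<omega>) \<le> real m / real N - \<epsilon>}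
      = {\<omega>\<in>space M. - l * (real m / real N - \<epsilon>) \<le> - l * (\<Sum>j\<in>{1..m}. max (t N j \<omega>) 0)}"
      using \<open>0 < l\<close> by auto
    also have "measure M \<dots> \<le> exp (- l * (\<Sum>j\<in>{1..m}. \<integral>\<omega>. max (t N j \<omega>) 0 \<partial>M)
        + 2 * (1 + C) - - l * (real m / real N - \<epsilon>))"
    proof (rule prob_sum_deviation)
      show "mono (\<lambda>x::real. max x 0)"
        by (rule monoI) (simp add: max_def)
      show "0 \<le> max (t N j \<omega>) 0 \<and> max (t N j \<omega>) 0 \<le> t N j \<omega>"
        if "1 \<le> j" "\<omega> \<in> space M" for j \<omega>
        using pos[OF that] by simp
      show "- l * max x 0 \<le> 1" for x
      proof -
        have "0 \<le> l * max x 0" using \<open>0 < l\<close> by simp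
        then show ?thesis by simp
      qed
    qed (use assms that in auto)
    also have "\<dots> = exp (2 * (1 + C) - l * \<epsilon>)"
      unfolding mean_eq by (simp add: algebra_simps)
    finally show ?thesis .
  qed
  have "measure M (\<Union>m\<in>{1..2 * N}. {\<omega>\<in>space M. (\<Sum>j\<in>{1..m}. t N j \<omega>) \<le> real m / real N - \<epsilon>})
    \<le> real (card {1..2 * N}) * exp (2 * (1 + C) - l * \<epsilon>)"
    by (rule measure_UN_le_card_mult[OF finite_atLeastAtMost])
      (rule sets_partial_sum_events(3)[OF assms(1)], erule single)
  then show ?thesis by simp
qed

(* Truncating the increments at N^(-2s) makes the Chernoff parameter l = N^(2s) admissible. *)
definition irregular :: "real \<Rightarrow> nat \<Rightarrow> 'a set" where
  "irregular s N =
    (\<Union>j\<in>{1..2 * N}. {\<omega>\<in>space M. real N powr (- 2 * s) < t N j \<omega>}) \<union>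
    (\<Union>m\<in>{1..2 * N}. {\<omega>\<in>space M.
      real m / real N + real N powr - s \<le> (\<Sum>j\<in>{1..m}. min (t N j \<omega>) (real N powr (- 2 * s)))}) \<union>
    (\<Union>m\<in>{1..2 * N}. {\<omega>\<in>space M. (\<Sum>j\<in>{1..m}. t N j \<omega>) \<le> real m / real N - real N powr - s})"

lemma sets_irregular: "irregular s N \<in> sets M"
proof (cases "N = 0")
  case False
  then have "1 \<le> N" by simp
  show ?thesis
    unfolding irregular_def
    by (intro sets.Un sets.finite_UN finite_atLeastAtMost ballI sets_partial_sum_events[OF \<open>1 \<le> N\<close>]) auto
qed (simp add: irregular_def)

lemma near_uniform_if_not_irregular:
  assumes "1 \<le> N" "0 \<le> s" "\<omega> \<in> space M" "\<omega> \<notin> irregular s N"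
  shows "near_uniform (real N powr - s) N (\<lambda>j. t N j \<omega>)"
proof (rule near_uniformI[where c = "real N powr (- 2 * s)"])
  show "real N powr (- 2 * s) \<le> real N powr - s"
    using assms by (intro powr_mono) auto
  show "t N j \<omega> \<le> real N powr (- 2 * s)" if "j \<in> {1..2 * N}" for j
  proof -
    have "\<omega> \<notin> {\<omega>\<in>space M. real N powr (- 2 * s) < t N j \<omega>}"
      using assms(4) that unfolding irregular_def by blast
    then show ?thesis using assms(3) by simp
  qed
  show "(\<Sum>j\<in>{1..m}. min (t N j \<omega>) (real N powr (- 2 * s))) < real m / real N + real N powr - s"
    if "m \<in> {1..2 * N}" for m
  proof -
    have "\<omega> \<notin> {\<omega>\<in>space M.
        real m / real N + real N powr - s \<le> (\<Sum>j\<in>{1..m}. min (t N j \<omega>) (real N powr (- 2 * s)))}"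
      using assms(4) that unfolding irregular_def by blast
    then show ?thesis using assms(3) by simp
  qed
  show "real m / real N - real N powr - s < (\<Sum>j\<in>{1..m}. t N j \<omega>)" if "m \<in> {1..2 * N}" for m
  proof -
    have "\<omega> \<notin> {\<omega>\<in>space M. (\<Sum>j\<in>{1..m}. t N j \<omega>) \<le> real m / real N - real N powr - s}"
      using assms(4) that unfolding irregular_def by blast
    then show ?thesis using assms(3) by simp
  qed
qed

lemma measure_irregular_le:
  assumes "1 \<le> N" "0 < s" "4 * s \<le> 1"
  shows "measure M (irregular s N)
    \<le> 2 * C * real N powr (1 - (1 - 2 * s) * (2 + r)) + 4 * exp (2 * (1 + C)) * (N * exp (- (N powr s)))"
proof -
  define l where "l = real N powr (2 * s)"
  have "0 < l" using assms by (simp add: l_def)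
  have "l\<^sup>2 = real N powr (4 * s)"
    by (simp add: l_def power2_eq_square powr_add[symmetric])
  also have "\<dots> \<le> real N powr 1"
    using assms by (intro powr_mono) auto
  finally have "l\<^sup>2 \<le> real N" using assms by simp
  have inv_l: "1 / l = real N powr (- 2 * s)"
    by (simp add: l_def powr_minus_divide)
  have l_times: "l * real N powr - s = real N powr s"
    by (simp add: l_def powr_add[symmetric])
  have N_c: "real N * real N powr (- 2 * s) = real N powr (1 - 2 * s)"
    using assms by (simp add: powr_diff powr_minus_divide)
  let ?A = "\<Union>j\<in>{1..2 * N}. {\<omega>\<in>space M. real N powr (- 2 * s) < t N j \<omega>}"
  let ?B = "\<Union>m\<in>{1..2 * N}. {\<omega>\<in>space M.
    real m / real N + real N powr - s \<le> (\<Sum>j\<in>{1..m}. min (t N j \<omega>) (real N powr (- 2 * s)))}"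
  let ?C = "\<Union>m\<in>{1..2 * N}. {\<omega>\<in>space M. (\<Sum>j\<in>{1..m}. t N j \<omega>) \<le> real m / real N - real N powr - s}"
  have sets_A: "?A \<in> sets M"
    by (intro sets.finite_UN finite_atLeastAtMost ballI sets_partial_sum_events[OF assms(1)]) simp
  have sets_B: "?B \<in> sets M" and sets_C: "?C \<in> sets M"
    by (intro sets.finite_UN finite_atLeastAtMost ballI sets_partial_sum_events[OF assms(1)])+
  have "measure M (irregular s N) \<le> measure M (?A \<union> ?B) + measure M ?C"
    unfolding irregular_def by (rule measure_Un_le[OF sets.Un[OF sets_A sets_B] sets_C])
  moreover have "measure M (?A \<union> ?B) \<le> measure M ?A + measure M ?B"
    by (rule measure_Un_le[OF sets_A sets_B])
  moreover have "measure M ?A \<le> 2 * C * real N powr (1 - (1 - 2 * s) * (2 + r))"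
  proof -
    have "2 * real N * (C / (real N * real N powr (- 2 * s)) powr (2 + r))
        = 2 * C * real N powr (1 - (1 - 2 * s) * (2 + r))"
      unfolding N_c powr_powr using assms by (simp add: powr_diff)
    moreover have "0 < real N powr (- 2 * s)"
      using assms by simp
    ultimately show ?thesis
      using prob_large_increment[OF assms(1)] by metis
  qed
  moreover have "measure M ?B \<le> 2 * real N * exp (2 * (1 + C) - real N powr s)"
    using prob_sum_above[OF assms(1) \<open>0 < l\<close> \<open>l\<^sup>2 \<le> real N\<close>, of "real N powr - s"]
    unfolding inv_l l_times .
  moreover have "measure M ?C \<le> 2 * real N * exp (2 * (1 + C) - real N powr s)"
    using prob_sum_below[OF assms(1) \<open>0 < l\<close> \<open>l\<^sup>2 \<le> real N\<close>, of "real N powr - s"]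
    unfolding l_times .
  moreover have "2 * real N * exp (2 * (1 + C) - real N powr s) = 2 * exp (2 * (1 + C)) * (N * exp (- (N powr s)))"
    by (simp add: exp_diff exp_minus field_simps)
  ultimately show ?thesis by linarith
qed

lemma AE_eventually_near_uniform:
  "\<exists>s>0. AE \<omega> in M. eventually (\<lambda>N. near_uniform (real N powr - s) N (\<lambda>j. t N j \<omega>)) sequentially"
proof -
  \<comment> \<open>so that (1 - 2s)(2 + r) = 2 + r/2 > 2: large increments have summable probability\<close>
  define s where "s = r / (4 * (2 + r))"
  have "0 < s" and "4 * s \<le> 1" and exponent: "1 - (1 - 2 * s) * (2 + r) = - 1 - r / 2"
    using r_pos by (auto simp: s_def field_simps)
  have bound: "measure M (irregular s N)
      \<le> 2 * C * real N powr (- 1 - r / 2) + 4 * exp (2 * (1 + C)) * (real N * exp (- (real N powr s)))"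
    if "1 \<le> N" for N
    using measure_irregular_le[OF that \<open>0 < s\<close> \<open>4 * s \<le> 1\<close>] unfolding exponent .
  have "summable (\<lambda>N. 2 * C * real N powr (- 1 - r / 2) + 4 * exp (2 * (1 + C)) * (real N * exp (- (real N powr s))))"
    using r_pos summable_real_mult_exp_neg_powr[OF \<open>0 < s\<close>]
    by (intro summable_add summable_mult) (auto simp: summable_real_powr_iff)
  then have "summable (\<lambda>N. measure M (irregular s N))"
    by (rule summable_comparison_test'[where N = 1]) (use bound in auto)
  then have "AE \<omega> in M. eventually (\<lambda>N. \<omega> \<in> space M - irregular s N) sequentially"
    by (intro borel_cantelli_AE1 sets_irregular) (simp add: less_top[symmetric])
  then have "AE \<omega> in M. eventually (\<lambda>N. near_uniform (real N powr - s) N (\<lambda>j. t N j \<omega>)) sequentially"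
  proof eventually_elim
    case (elim \<omega>)
    then show ?case
      using eventually_ge_at_top[of 1]
      by eventually_elim (use near_uniform_if_not_irregular \<open>0 < s\<close> in auto)
  qed
  then show ?thesis using \<open>0 < s\<close> by blast
qed

end

theorem theorem2p1:
  fixes M :: "'a measure"
    and t :: "nat \<Rightarrow> nat \<Rightarrow> 'a \<Rightarrow> real"
    and W :: "real \<Rightarrow> 'a \<Rightarrow> real"
    and a r C :: real
  assumes "prob_space M"
    and meas: "\<And>N j. N \<ge> 1 \<Longrightarrow> j \<ge> 1 \<Longrightarrow> t N j \<in> borel_measurable M"
    and pos: "\<And>N j \<omega>. N \<ge> 1 \<Longrightarrow> j \<ge> 1 \<Longrightarrow> \<omega> \<in> space M \<Longrightarrow> t N j \<omega> > 0"
    and int: "\<And>N j. N \<ge> 1 \<Longrightarrow> j \<ge> 1 \<Longrightarrow> integrable M (t N j)"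
    and mean: "\<And>N j. N \<ge> 1 \<Longrightarrow> j \<ge> 1 \<Longrightarrow> (\<integral>\<omega>. t N j \<omega> \<partial>M) = 1 / real N"
    and r_pos: "r > 0" and C_pos: "C > 0"
    and mom_int: "\<And>N j. N \<ge> 1 \<Longrightarrow> j \<ge> 1 \<Longrightarrow> integrable M (\<lambda>\<omega>. t N j \<omega> powr (2 + r))"
    and mom: "\<And>N j. N \<ge> 1 \<Longrightarrow> j \<ge> 1 \<Longrightarrow>
                (\<integral>\<omega>. t N j \<omega> powr (2 + r) \<partial>M) \<le> C / real N powr (2 + r)"
    and nsd: "\<And>N m. N \<ge> 1 \<Longrightarrow> NSD M m (t N)"
    and W_meas: "\<And>s. s \<ge> 0 \<Longrightarrow> W s \<in> borel_measurable M"
    and W_cont: "AE \<omega> in M. continuous_on {0..} (\<lambda>s. W s \<omega>)"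
  shows "AE \<omega> in M.
    (\<lambda>N. let \<tau> = (\<lambda>i. \<Sum>j\<in>{1..i}. t N j \<omega>);
             n = card {j. j \<ge> 1 \<and> \<tau> j \<le> 1};
             Y = (\<lambda>i. a * \<tau> i + (W (\<tau> i) \<omega> - W (\<tau> (i - 1)) \<omega>));
             ahat = (\<Sum>i\<in>{1..n}. Y i * \<tau> i) / (\<Sum>i\<in>{1..n}. (\<tau> i)\<^sup>2)
         in real n * (ahat - a))
    \<longlonglongrightarrow> 3 * integral {0..1} (\<lambda>s. W 1 \<omega> - W s \<omega>)"
proof -
  interpret nsd_sampling M t r C
  proof (rule nsd_sampling.intro)
    show "nsd_sampling_axioms M t r C"
      by unfold_locales (fact meas pos int mean r_pos C_pos mom_int mom nsd)+
  qed fact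
  obtain s where "0 < s"
    and near: "AE \<omega> in M. eventually (\<lambda>N. near_uniform (real N powr - s) N (\<lambda>j. t N j \<omega>)) sequentially"
    using AE_eventually_near_uniform by blast
  have mesh: "(\<lambda>N. real N powr - s) \<longlonglongrightarrow> 0"
    using tendsto_neg_powr[of "- s", OF _ filterlim_real_sequentially] \<open>0 < s\<close> by simp
  show ?thesis
    using near W_cont AE_space
  proof eventually_elim
    case (elim \<omega>)
    then have "continuous_on {0..1} (\<lambda>s. W s \<omega>)"
      by (auto elim: continuous_on_subset)
    moreover have "\<And>N j. 1 \<le> N \<Longrightarrow> 1 \<le> j \<Longrightarrow> 0 < t N j \<omega>"
      using pos elim by blast
    ultimately show ?case
      using tendsto_least_squares_error[where x = "\<lambda>N j. t N j \<omega>", OF _ _ mesh] elim by blast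
  qed
qed

end
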